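(* Let $\mathcal T$ be a transducer with $n\ge1$ states. The following are equivalent: (1) $\mathcal T$ is not zero-avoiding (with any bound $k\in\mathbb N_0$); (2) $\mathcal T$ has a computation $P$ with $d_{max}(P)\ge n$ and $d(P)=0$; (3) $\mathcal T$ has a computation $P$ of the form $P=BC_1AC_2D$, for some paths $B,C_1,A,C_2,D$, where $C_1,C_2$ are cycles with $d(C_1)\,d(C_2)<0$.
   Context: A transducer is a quintuple $\mathcal T=(Q,\Sigma,E,I,F)$ with finite state set $Q$, finite alphabet $\Sigma$, finite transition set $E\subseteq Q\times\{x/y : x,y\in\Sigma\cup\{\lambda\}\}\times Q$ ($\lambda$ the empty word), nonempty initial set $I\subseteq Q$, final set $F\subseteq Q$. A path is a finite sequence of consecutive transitions; its label $x_1\cdots x_\ell/y_1\cdots y_\ell$ is formed by concatenating input parts and output parts. A cycle is a path whose first and last states coincide. A computation is a path that is empty or starts at an initial state. For a path $P$ with label $u/v$, $d(P)=|u|-|v|$, and $d_{max}(P)=\max\{|d(Q)| : Q\text{ a prefix of }P\}$ (prefixes being initial segments of transitions, including the empty path). $\mathcal T$ is zero-avoiding with bound $k\in\mathbb N_0$ if for every computation $P$ of $\mathcal T$, $d_{max}(P)>k$ implies $d(P)\neq0$; $\mathcal T$ is zero-avoiding if it is zero-avoiding with some bound $k\in\mathbb N_0$. *)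

theory Defs
  imports Main
begin

text \<open>A transition is (source, input letter or empty word, output letter or empty word, target).
  The empty word lambda is represented by None.\<close>
type_synonym ('q, 'a) trans = "'q \<times> 'a option \<times> 'a option \<times> 'q"

definition src :: "('q, 'a) trans \<Rightarrow> 'q" where
  "src t = fst t"
definition inp :: "('q, 'a) trans \<Rightarrow> 'a option" where
  "inp t = fst (snd t)"
definition outp :: "('q, 'a) trans \<Rightarrow> 'a option" where
  "outp t = fst (snd (snd t))"
definition tgt :: "('q, 'a) trans \<Rightarrow> 'q" where
  "tgt t = snd (snd (snd t))"

definition transducer ::
  "'q set \<Rightarrow> 'a set \<Rightarrow> ('q, 'a) trans set \<Rightarrow> 'q set \<Rightarrow> 'q set \<Rightarrow> bool" where
  "transducer Q \<Sigma> E I F \<longleftrightarrow>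
     finite Q \<and> finite \<Sigma> \<and> finite E \<and>
     (\<forall>t\<in>E. src t \<in> Q \<and> tgt t \<in> Q \<and> set_option (inp t) \<subseteq> \<Sigma> \<and> set_option (outp t) \<subseteq> \<Sigma>) \<and>
     I \<noteq> {} \<and> I \<subseteq> Q \<and> F \<subseteq> Q"

definition is_path :: "('q, 'a) trans set \<Rightarrow> ('q, 'a) trans list \<Rightarrow> bool" where
  "is_path E P \<longleftrightarrow> set P \<subseteq> E \<and> (\<forall>i. Suc i < length P \<longrightarrow> tgt (P ! i) = src (P ! Suc i))"

definition is_cycle :: "('q, 'a) trans set \<Rightarrow> ('q, 'a) trans list \<Rightarrow> bool" where
  "is_cycle E P \<longleftrightarrow> is_path E P \<and> P \<noteq> [] \<and> src (hd P) = tgt (last P)"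

definition computation ::
  "('q, 'a) trans set \<Rightarrow> 'q set \<Rightarrow> ('q, 'a) trans list \<Rightarrow> bool" where
  "computation E I P \<longleftrightarrow> is_path E P \<and> (P = [] \<or> src (hd P) \<in> I)"

definition dd :: "('q, 'a) trans list \<Rightarrow> int" where
  "dd P = int (length (concat (map (\<lambda>t. case inp t of None \<Rightarrow> [] | Some x \<Rightarrow> [x]) P)))
        - int (length (concat (map (\<lambda>t. case outp t of None \<Rightarrow> [] | Some y \<Rightarrow> [y]) P)))"

definition dmax :: "('q, 'a) trans list \<Rightarrow> int" where
  "dmax P = Max ((\<lambda>i. \<bar>dd (take i P)\<bar>) ` {0..length P})"

definition zero_avoiding_with_bound ::
  "('q, 'a) trans set \<Rightarrow> 'q set \<Rightarrow> nat \<Rightarrow> bool" where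
  "zero_avoiding_with_bound E I k \<longleftrightarrow>
     (\<forall>P. computation E I P \<longrightarrow> dmax P > int k \<longrightarrow> dd P \<noteq> 0)"

definition zero_avoiding :: "('q, 'a) trans set \<Rightarrow> 'q set \<Rightarrow> bool" where
  "zero_avoiding E I \<longleftrightarrow> (\<exists>k. zero_avoiding_with_bound E I k)"

end

theory Submission
  imports Defs
begin

text \<open>Let \<open>h i\<close> be the difference of the prefix of length \<open>i\<close> of a computation with
  \<open>d = 0\<close> and \<open>d\<^sub>m\<^sub>a\<^sub>x \<ge> n\<close>; it moves by at most one per transition. On the way from
  \<open>0\<close> up to a height \<open>n\<close> (after flipping signs if necessary), the first visits of the heights
  \<open>0, \<dots>, n\<close> are \<open>n + 1\<close> positions carrying only \<open>n\<close> states, so two of them bound a cycle of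
  positive difference; reversing time on the way back to \<open>0\<close> gives a later cycle of negative
  difference. Conversely, pumping the first cycle often enough pushes the difference beyond any
  bound, and pumping the second one afterwards brings it back across \<open>0\<close>; a discrete
  intermediate value argument then yields a computation with difference \<open>0\<close> and arbitrarily
  large \<open>d\<^sub>m\<^sub>a\<^sub>x\<close>, so no bound works.\<close>

text \<open>Unlike \<open>is_path\<close>, \<open>walk\<close> also pins down the end states of an empty path, which makes
  concatenation and pumping compositional.\<close>

fun walk :: "('q, 'a) trans set \<Rightarrow> 'q \<Rightarrow> ('q, 'a) trans list \<Rightarrow> 'q \<Rightarrow> bool" where
  "walk E p [] q \<longleftrightarrow> p = q"
| "walk E p (t # P) q \<longleftrightarrow> t \<in> E \<and> src t = p \<and> walk E (tgt t) P q"

fun end_state :: "'q \<Rightarrow> ('q, 'a) trans list \<Rightarrow> 'q" where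
  "end_state p [] = p"
| "end_state p (t # P) = end_state (tgt t) P"

lemma walk_append: "walk E p (xs @ ys) r \<longleftrightarrow> (\<exists>q. walk E p xs q \<and> walk E q ys r)"
  by (induction xs arbitrary: p) auto

lemma walk_appendI: "walk E p xs q \<Longrightarrow> walk E q ys r \<Longrightarrow> walk E p (xs @ ys) r"
  using walk_append by metis

lemma walk_end_state: "walk E p P q \<Longrightarrow> end_state p P = q"
  by (induction P arbitrary: p) auto

lemma walk_src_hd: "walk E p P q \<Longrightarrow> P \<noteq> [] \<Longrightarrow> src (hd P) = p"
  by (cases P) auto

lemma walk_tgt_last: "walk E p P q \<Longrightarrow> P \<noteq> [] \<Longrightarrow> tgt (last P) = q"
  by (induction P arbitrary: p) (auto split: if_splits)

lemma walk_in_states: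
  "walk E p P q \<Longrightarrow> \<forall>t\<in>E. tgt t \<in> Q \<Longrightarrow> p \<in> Q \<Longrightarrow> q \<in> Q"
  by (induction P arbitrary: p) auto

lemma walk_power: "walk E q C q \<Longrightarrow> walk E q (concat (replicate N C)) q"
  by (induction N) (auto simp: walk_append)

lemma is_path_Cons:
  "is_path E (t # P) \<longleftrightarrow> t \<in> E \<and> is_path E P \<and> (P \<noteq> [] \<longrightarrow> tgt t = src (hd P))"
  unfolding is_path_def by (auto simp: nth_Cons' hd_conv_nth split: if_splits)

lemma is_path_iff_walk: "is_path E P \<longleftrightarrow> (\<exists>p q. walk E p P q)"
proof (induction P)
  case Nil
  then show ?case by (simp add: is_path_def)
next
  case (Cons t P)
  then show ?case
    by (cases P) (auto simp: is_path_Cons dest: walk_src_hd)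
qed

lemma take_append_slice: "x \<le> y \<Longrightarrow> take x P @ drop x (take y P) = take y P"
  by (metis append_take_drop_id min.absorb1 take_take)

lemma walk_slice:
  assumes "walk E p P q" and "x \<le> y"
  shows "walk E (end_state p (take x P)) (drop x (take y P)) (end_state p (take y P))"
proof -
  obtain s where s: "walk E p (take y P) s"
    using assms(1) append_take_drop_id[of y P] walk_append by metis
  then obtain r where "walk E p (take x P) r" and "walk E r (drop x (take y P)) s"
    using take_append_slice[OF assms(2)] walk_append by metis
  then show ?thesis
    using s by (simp add: walk_end_state)
qed

lemma walk_take: "walk E p P q \<Longrightarrow> walk E p (take i P) (end_state p (take i P))"
  using walk_slice[of E p P q 0 i] by simp

lemma computation_if_walk: "walk E p P q \<Longrightarrow> p \<in> I \<Longrightarrow> computation E I P"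
  unfolding computation_def is_path_iff_walk by (auto dest: walk_src_hd)

lemma walk_if_computation:
  assumes "computation E I P" and "P \<noteq> []"
  obtains p q where "p \<in> I" and "walk E p P q"
  using assms unfolding computation_def is_path_iff_walk by (auto dest: walk_src_hd)

lemma is_cycle_if_walk: "walk E p C p \<Longrightarrow> C \<noteq> [] \<Longrightarrow> is_cycle E C"
  unfolding is_cycle_def is_path_iff_walk by (auto dest: walk_src_hd walk_tgt_last)

lemma walk_cycle_closed: "is_cycle E C \<Longrightarrow> walk E p C q \<Longrightarrow> q = p"
  unfolding is_cycle_def by (metis walk_src_hd walk_tgt_last)

lemma walks_through_cycles:
  assumes "computation E I (B @ C1 @ A @ C2 @ D)" and "is_cycle E C1" and "is_cycle E C2"
  obtains p q1 q2 where "p \<in> I" and "walk E p B q1" and "walk E q1 C1 q1"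
    and "walk E q1 A q2" and "walk E q2 C2 q2"
proof -
  have "C1 \<noteq> []"
    using \<open>is_cycle E C1\<close> by (simp add: is_cycle_def)
  then obtain p r where "p \<in> I" and "walk E p (B @ C1 @ A @ C2 @ D) r"
    using assms(1) by (auto elim: walk_if_computation)
  then obtain q1 q1' q2 q2' where "walk E p B q1" and C1: "walk E q1 C1 q1'"
    and "walk E q1' A q2" and C2: "walk E q2 C2 q2'"
    by (auto simp: walk_append)
  moreover have "q1' = q1" and "q2' = q2"
    using walk_cycle_closed[OF \<open>is_cycle E C1\<close> C1] walk_cycle_closed[OF \<open>is_cycle E C2\<close> C2]
    by simp_all
  ultimately show ?thesis
    using that \<open>p \<in> I\<close> by simp
qed

lemma is_path_slice:
  assumes "is_path E P"
  shows "is_path E (drop x (take y P))"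
proof (cases "x \<le> y")
  case True
  from assms obtain p q where "walk E p P q"
    unfolding is_path_iff_walk by blast
  from walk_slice[OF this True] show ?thesis
    unfolding is_path_iff_walk by blast
next
  case False
  then have "drop x (take y P) = []"
    by simp
  then show ?thesis
    by (simp add: is_path_def)
qed

lemma cycle_at_repeated_state:
  assumes "walk E p P q" and "x < y" and "y \<le> length P"
    and "end_state p (take x P) = end_state p (take y P)"
  shows "is_cycle E (drop x (take y P))"
proof (rule is_cycle_if_walk)
  show "walk E (end_state p (take x P)) (drop x (take y P)) (end_state p (take x P))"
    using walk_slice[OF assms(1), of x y] assms(2,4) by simp
  show "drop x (take y P) \<noteq> []"
    using assms(2,3) by simp
qed

lemma dd_Nil [simp]: "dd [] = 0"
  by (simp add: dd_def)

lemma dd_append [simp]: "dd (xs @ ys) = dd xs + dd ys"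
  by (simp add: dd_def)

lemma dd_slice: "x \<le> y \<Longrightarrow> dd (drop x (take y P)) = dd (take y P) - dd (take x P)"
  using take_append_slice[of x y P] dd_append by (metis add_diff_cancel_left')

lemma dd_take_Suc: "i < length P \<Longrightarrow> \<bar>dd (take (Suc i) P) - dd (take i P)\<bar> \<le> 1"
  by (simp add: take_Suc_conv_app_nth dd_def split: option.splits)

lemma dd_power: "dd (concat (replicate N C)) = int N * dd C"
  by (induction N) (auto simp: algebra_simps)

lemma dmax_ge: "i \<le> length P \<Longrightarrow> \<bar>dd (take i P)\<bar> \<le> dmax P"
  unfolding dmax_def by (rule Max_ge) auto

lemma dmax_attained: "\<exists>i\<le>length P. dmax P = \<bar>dd (take i P)\<bar>"
proof -
  have "dmax P \<in> (\<lambda>i. \<bar>dd (take i P)\<bar>) ` {0..length P}"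
    unfolding dmax_def by (rule Max_in) auto
  then show ?thesis by auto
qed

lemma zero_between:
  fixes h :: "nat \<Rightarrow> int"
  assumes steps: "\<forall>i. a \<le> i \<and> i < b \<longrightarrow> \<bar>h (Suc i) - h i\<bar> \<le> 1"
    and "a \<le> b" and "h a * h b \<le> 0"
  shows "\<exists>i. a \<le> i \<and> i \<le> b \<and> h i = 0"
proof (cases "h a \<le> 0 \<and> 0 \<le> h b")
  case True
  then show ?thesis using nat_intermed_int_val[OF steps \<open>a \<le> b\<close>] by blast
next
  case False
  have "\<forall>i. a \<le> i \<and> i < b \<longrightarrow> \<bar>- h (Suc i) - - h i\<bar> \<le> 1"
    using steps by (simp add: abs_minus_commute)
  moreover have "- h a \<le> 0" "0 \<le> - h b"
    using False \<open>h a * h b \<le> 0\<close> by (auto simp: mult_le_0_iff)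
  ultimately show ?thesis using nat_intermed_int_val[of a b "\<lambda>i. - h i" 0] \<open>a \<le> b\<close> by auto
qed

lemma levels_visited_in_order:
  fixes h :: "nat \<Rightarrow> int"
  assumes steps: "\<forall>i<j. \<bar>h (Suc i) - h i\<bar> \<le> 1" and h0: "h 0 = 0" and hj: "int m \<le> h j"
  shows "\<exists>f. strict_mono_on {..m} f \<and> (\<forall>l\<le>m. f l \<le> j \<and> h (f l) = int l)"
proof -
  define first where "first l = (LEAST i. h i = int l)" for l :: nat
  have reached: "\<exists>i\<le>k. h i = int l" if "k \<le> j" and "int l \<le> h k" for k l
  proof -
    have "\<forall>i<k. \<bar>h (i + 1) - h i\<bar> \<le> 1"
      using steps \<open>k \<le> j\<close> by simp
    then show ?thesis
      using h0 \<open>int l \<le> h k\<close> by (intro nat0_intermed_int_val) simp_all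
  qed
  have first_le: "first l \<le> i" and first_hits: "h (first l) = int l" if "h i = int l" for i l
    unfolding first_def using that by (fact Least_le, fact LeastI)
  have first: "first l \<le> j \<and> h (first l) = int l" if l: "l \<le> m" for l
  proof -
    obtain i where "i \<le> j" "h i = int l"
      using reached[of j l] l hj by auto
    then show ?thesis
      using first_le first_hits le_trans by blast
  qed
  have "first l < first l'" if ll': "l < l'" "l' \<le> m" for l l'
  proof -
    obtain i where "i \<le> first l'" "h i = int l"
      using reached[of "first l'" l] first[of l'] ll' by auto
    then have "first l \<le> first l'"
      using first_le by (meson le_trans)
    moreover have "first l \<noteq> first l'"
      using first[of l] first[of l'] ll' by auto
    ultimately show ?thesis by simp
  qed
  then have "strict_mono_on {..m} first"
    by (intro strict_mono_onI) auto
  with first show ?thesis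
    by blast
qed

lemma ascent_repeats_state:
  fixes h :: "nat \<Rightarrow> int" and st :: "nat \<Rightarrow> 'q"
  assumes "\<forall>i<j. \<bar>h (Suc i) - h i\<bar> \<le> 1" and "h 0 = 0"
    and "int (card Q) \<le> h j" and "finite Q" and "st ` {..j} \<subseteq> Q"
  shows "\<exists>a b. a < b \<and> b \<le> j \<and> st a = st b \<and> h a < h b"
proof -
  obtain f where mono: "strict_mono_on {..card Q} f"
    and f: "\<forall>l\<le>card Q. f l \<le> j \<and> h (f l) = int l"
    using levels_visited_in_order assms(1-3) by blast
  have "\<not> inj_on (st \<circ> f) {..card Q}"
  proof
    assume inj: "inj_on (st \<circ> f) {..card Q}"
    have "(st \<circ> f) ` {..card Q} \<subseteq> Q"
      using f \<open>st ` {..j} \<subseteq> Q\<close> by auto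
    from card_inj_on_le[OF inj this \<open>finite Q\<close>] show False by simp
  qed
  then obtain l l' where l: "l < l'" "l' \<le> card Q" "st (f l) = st (f l')"
    unfolding inj_on_def by (metis atMost_iff comp_apply linorder_neq_iff)
  show ?thesis
  proof (intro exI conjI)
    show "f l < f l'"
      using mono l by (simp add: strict_mono_on_def)
  qed (use f l in auto)
qed

lemma descent_repeats_state:
  fixes h :: "nat \<Rightarrow> int" and st :: "nat \<Rightarrow> 'q"
  assumes steps: "\<forall>i<L. \<bar>h (Suc i) - h i\<bar> \<le> 1" and hL: "h L = 0" and "j \<le> L"
    and hj: "int (card Q) \<le> h j" and "finite Q" and stQ: "st ` {j..L} \<subseteq> Q"
  shows "\<exists>c e. j \<le> c \<and> c < e \<and> e \<le> L \<and> st c = st e \<and> h e < h c"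
proof -
  have "\<forall>i<L - j. \<bar>h (L - Suc i) - h (L - i)\<bar> \<le> 1"
  proof (intro allI impI)
    fix i assume "i < L - j"
    then have "L - i = Suc (L - Suc i)" and "L - Suc i < L" by auto
    then show "\<bar>h (L - Suc i) - h (L - i)\<bar> \<le> 1"
      using steps by (metis abs_minus_commute)
  qed
  moreover have "(\<lambda>i. st (L - i)) ` {..L - j} \<subseteq> Q"
    using stQ \<open>j \<le> L\<close> by (auto simp: image_subset_iff)
  ultimately obtain a b where "a < b" "b \<le> L - j" "st (L - a) = st (L - b)" "h (L - a) < h (L - b)"
    using ascent_repeats_state[of "L - j" "\<lambda>i. h (L - i)" Q "\<lambda>i. st (L - i)"]
      hL hj \<open>j \<le> L\<close> \<open>finite Q\<close> by auto
  then show ?thesis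
    using \<open>j \<le> L\<close> by (intro exI[of _ "L - b"] exI[of _ "L - a"]) auto
qed

lemma excursion_has_up_and_down_cycles:
  fixes h :: "nat \<Rightarrow> int" and st :: "nat \<Rightarrow> 'q"
  assumes steps: "\<forall>i<L. \<bar>h (Suc i) - h i\<bar> \<le> 1" and "h 0 = 0" and "h L = 0"
    and "j \<le> L" and "int (card Q) \<le> h j" and "finite Q" and stQ: "st ` {..L} \<subseteq> Q"
  shows "\<exists>a b c e. a < b \<and> b \<le> c \<and> c < e \<and> e \<le> L \<and> st a = st b \<and> st c = st e
    \<and> h a < h b \<and> h e < h c"
proof -
  have ascent_states: "st ` {..j} \<subseteq> Q" and descent_states: "st ` {j..L} \<subseteq> Q"
    using stQ \<open>j \<le> L\<close> by auto
  obtain a b where "a < b" "b \<le> j" "st a = st b" "h a < h b"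
    using ascent_repeats_state[of j h Q st] ascent_states assms by auto
  moreover obtain c e where "j \<le> c" "c < e" "e \<le> L" "st c = st e" "h e < h c"
    using descent_repeats_state[of L h j Q st] descent_states assms by auto
  ultimately show ?thesis
    by (meson order.trans)
qed

lemma excursion_has_opposite_cycles:
  fixes h :: "nat \<Rightarrow> int" and st :: "nat \<Rightarrow> 'q"
  assumes steps: "\<forall>i<L. \<bar>h (Suc i) - h i\<bar> \<le> 1" and "h 0 = 0" and "h L = 0"
    and "j \<le> L" and hj: "int (card Q) \<le> \<bar>h j\<bar>" and "finite Q" and "st ` {..L} \<subseteq> Q"
  shows "\<exists>a b c e. a < b \<and> b \<le> c \<and> c < e \<and> e \<le> L \<and> st a = st b \<and> st c = st e
    \<and> (h b - h a) * (h e - h c) < 0"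
proof (cases "0 \<le> h j")
  case True
  then obtain a b c e where "a < b \<and> b \<le> c \<and> c < e \<and> e \<le> L \<and> st a = st b \<and> st c = st e
      \<and> h a < h b \<and> h e < h c"
    using excursion_has_up_and_down_cycles[of L h j Q st] assms by auto
  then show ?thesis
    by (intro exI[of _ a] exI[of _ b] exI[of _ c] exI[of _ e]) (simp add: mult_pos_neg)
next
  case False
  have "\<forall>i<L. \<bar>- h (Suc i) - - h i\<bar> \<le> 1"
    using steps by (simp add: abs_minus_commute)
  then obtain a b c e where "a < b \<and> b \<le> c \<and> c < e \<and> e \<le> L \<and> st a = st b \<and> st c = st e
      \<and> h b < h a \<and> h c < h e"
    using excursion_has_up_and_down_cycles[of L "\<lambda>i. - h i" j Q st] False assms by auto
  then show ?thesis
    by (intro exI[of _ a] exI[of _ b] exI[of _ c] exI[of _ e]) (simp add: mult_neg_pos)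
qed

lemma opposite_cycles_if_dmax_ge_card:
  assumes "transducer Q \<Sigma> E I F" and comp: "computation E I P"
    and "int (card Q) \<le> dmax P" and "dd P = 0"
  shows "\<exists>B C1 A C2 D. computation E I (B @ C1 @ A @ C2 @ D)
    \<and> is_path E B \<and> is_cycle E C1 \<and> is_path E A \<and> is_cycle E C2 \<and> is_path E D
    \<and> dd C1 * dd C2 < 0"
proof -
  have "finite Q" and states: "\<forall>t\<in>E. tgt t \<in> Q" and "I \<subseteq> Q" and "I \<noteq> {}"
    using assms(1) unfolding transducer_def by auto
  then have "card Q > 0"
    by (metis card_gt_0_iff subset_empty)
  have "P \<noteq> []"
  proof
    assume "P = []"
    then have "dmax P = 0"
      by (simp add: dmax_def)
    with \<open>card Q > 0\<close> \<open>int (card Q) \<le> dmax P\<close> show False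
      by simp
  qed
  then obtain p q where "p \<in> I" and walk: "walk E p P q"
    using comp by (auto elim: walk_if_computation)
  define h where "h i = dd (take i P)" for i
  define st where "st i = end_state p (take i P)" for i
  obtain j where "j \<le> length P" and hj: "int (card Q) \<le> \<bar>h j\<bar>"
    using dmax_attained[of P] \<open>int (card Q) \<le> dmax P\<close> unfolding h_def by auto
  have steps: "\<forall>i<length P. \<bar>h (Suc i) - h i\<bar> \<le> 1"
    by (simp add: h_def dd_take_Suc)
  have "h 0 = 0" and "h (length P) = 0"
    using \<open>dd P = 0\<close> by (simp_all add: h_def)
  have "st ` {..length P} \<subseteq> Q"
    using walk_in_states[OF walk_take[OF walk] states] \<open>p \<in> I\<close> \<open>I \<subseteq> Q\<close>
    unfolding st_def by blast
  obtain a b c e where abce: "a < b" "b \<le> c" "c < e" "e \<le> length P" "st a = st b" "st c = st e"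
    and opposite: "(h b - h a) * (h e - h c) < 0"
    using excursion_has_opposite_cycles[OF steps \<open>h 0 = 0\<close> \<open>h (length P) = 0\<close> \<open>j \<le> length P\<close> hj
        \<open>finite Q\<close> \<open>st ` {..length P} \<subseteq> Q\<close>]
    by blast
  have path: "is_path E P"
    using comp by (simp add: computation_def)
  show ?thesis
  proof (intro exI conjI)
    have "take a P @ drop a (take b P) @ drop b (take c P) @ drop c (take e P) @ drop e P = P"
      (is "?parts = P")
      using abce by (simp add: take_append_slice flip: append_assoc)
    with comp show "computation E I ?parts"
      by simp
    show "is_cycle E (drop a (take b P))" "is_cycle E (drop c (take e P))"
      using cycle_at_repeated_state[OF walk] abce by (auto simp: st_def)
    show "dd (drop a (take b P)) * dd (drop c (take e P)) < 0"
      using opposite abce by (simp add: h_def dd_slice)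
    show "is_path E (take a P)" "is_path E (drop b (take c P))" "is_path E (drop e P)"
      using is_path_slice[OF path, of 0 a] is_path_slice[OF path, of b c]
        is_path_slice[OF path, of e "length P"] by simp_all
  qed
qed

lemma pumped_height:
  fixes a b c :: int
  assumes "c \<noteq> 0" and N: "int m + \<bar>a\<bar> + \<bar>b\<bar> \<le> int N"
  shows "int m \<le> \<bar>b + int N * c + a\<bar>" and "0 \<le> (b + int N * c + a) * c"
proof -
  have "int m \<le> b + int N * c + a \<and> 0 < c \<or> b + int N * c + a \<le> - int m \<and> c < 0"
  proof (cases "0 < c")
    case True
    then have "int N \<le> int N * c"
      using mult_left_mono[of 1 c "int N"] by simp
    then show ?thesis
      using True N by simp
  next
    case False
    then have "int N * c \<le> - int N"
      using assms(1) mult_left_mono[of c "-1" "int N"] by simp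
    then show ?thesis
      using False assms(1) N by simp
  qed
  then show "int m \<le> \<bar>b + int N * c + a\<bar>" and "0 \<le> (b + int N * c + a) * c"
    by (auto simp: zero_le_mult_iff)
qed

lemma overshoot_opposite_sign:
  fixes x c :: int
  assumes "x * c \<le> 0" and "c \<noteq> 0"
  shows "x * (x + \<bar>x\<bar> * c) \<le> 0"
proof (cases x "0 :: int" rule: linorder_cases)
  case less
  then have "0 < c"
    using assms by (auto simp: mult_le_0_iff)
  then have "x * c \<le> x * 1"
    using mult_left_mono_neg[of 1 c x] less by simp
  then have "0 \<le> x + \<bar>x\<bar> * c"
    using less by simp
  then show ?thesis
    using less by (simp add: mult_nonpos_nonneg)
next
  case equal
  then show ?thesis by simp
next
  case greater
  then have "c < 0"
    using assms by (auto simp: mult_le_0_iff)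
  then have "x * c \<le> x * -1"
    using mult_left_mono[of c "-1" x] greater by simp
  then have "x + \<bar>x\<bar> * c \<le> 0"
    using greater by simp
  then show ?thesis
    using greater by (simp add: mult_nonneg_nonpos)
qed

lemma zero_computation_from_opposite_cycles:
  assumes comp: "computation E I (B @ C1 @ A @ C2 @ D)"
    and "is_cycle E C1" and "is_cycle E C2" and opposite: "dd C1 * dd C2 < 0"
  shows "\<exists>P. computation E I P \<and> int m \<le> dmax P \<and> dd P = 0"
proof -
  obtain p q1 q2 where "p \<in> I" and B: "walk E p B q1" and C1: "walk E q1 C1 q1"
    and A: "walk E q1 A q2" and C2: "walk E q2 C2 q2"
    using walks_through_cycles[OF comp \<open>is_cycle E C1\<close> \<open>is_cycle E C2\<close>] .
  have "dd C1 \<noteq> 0" and "dd C2 \<noteq> 0"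
    using opposite by auto
  \<comment> \<open>\<open>N\<close> copies of \<open>C1\<close> outweigh \<open>B\<close> and \<open>A\<close>;
    then \<open>M\<close> copies of \<open>C2\<close> carry the difference across \<open>0\<close>.\<close>
  define N where "N = m + nat \<bar>dd B\<bar> + nat \<bar>dd A\<bar>"
  define X where "X = B @ concat (replicate N C1) @ A"
  define M where "M = nat \<bar>dd X\<bar>"
  define P where "P = X @ concat (replicate M C2)"
  have "walk E p P q2"
    unfolding P_def X_def append_assoc
    by (intro walk_appendI[OF B] walk_appendI[OF walk_power[OF C1]] walk_appendI[OF A] walk_power[OF C2])
  have dd_X: "dd X = dd B + int N * dd C1 + dd A"
    by (simp add: X_def dd_power)
  have "int m \<le> \<bar>dd X\<bar>" and "0 \<le> dd X * dd C1"
    using pumped_height[OF \<open>dd C1 \<noteq> 0\<close>, of m "dd A" "dd B" N] unfolding dd_X N_def by simp_all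
  then have "dd X * dd C2 \<le> 0"
    using opposite by (auto simp: mult_less_0_iff zero_le_mult_iff mult_le_0_iff)
  then have "dd X * dd P \<le> 0"
    using overshoot_opposite_sign \<open>dd C2 \<noteq> 0\<close> by (simp add: P_def M_def dd_power)
  moreover have "\<forall>i. length X \<le> i \<and> i < length P \<longrightarrow>
      \<bar>dd (take (Suc i) P) - dd (take i P)\<bar> \<le> 1"
    using dd_take_Suc by blast
  ultimately obtain i where "length X \<le> i" "i \<le> length P" "dd (take i P) = 0"
    using zero_between[of "length X" "length P" "\<lambda>i. dd (take i P)"] by (auto simp: P_def)
  show ?thesis
  proof (intro exI conjI)
    show "computation E I (take i P)"
      using walk_take[OF \<open>walk E p P q2\<close>] \<open>p \<in> I\<close> by (rule computation_if_walk)
    have "take (length X) (take i P) = X"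
      using \<open>length X \<le> i\<close> by (simp add: P_def min_def)
    then show "int m \<le> dmax (take i P)"
      using dmax_ge[of "length X" "take i P"] \<open>length X \<le> i\<close> \<open>i \<le> length P\<close> \<open>int m \<le> \<bar>dd X\<bar>\<close>
      by simp
    show "dd (take i P) = 0" by fact
  qed
qed

lemma not_zero_avoiding_iff:
  "\<not> zero_avoiding E I \<longleftrightarrow> (\<forall>k. \<exists>P. computation E I P \<and> int k < dmax P \<and> dd P = 0)"
  by (auto simp: zero_avoiding_def zero_avoiding_with_bound_def)

theorem proposition3:
  fixes Q :: "'q set" and \<Sigma> :: "'a set" and E :: "('q, 'a) trans set"
    and I F :: "'q set" and n :: nat
  assumes "transducer Q \<Sigma> E I F"
    and "card Q = n" and "n \<ge> 1"
  shows "(\<not> zero_avoiding E I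
           \<longleftrightarrow> (\<exists>P. computation E I P \<and> dmax P \<ge> int n \<and> dd P = 0))
       \<and> ((\<exists>P. computation E I P \<and> dmax P \<ge> int n \<and> dd P = 0)
           \<longleftrightarrow> (\<exists>B C1 A C2 D. computation E I (B @ C1 @ A @ C2 @ D)
                  \<and> is_path E B \<and> is_cycle E C1 \<and> is_path E A \<and> is_cycle E C2 \<and> is_path E D
                  \<and> dd C1 * dd C2 < 0))"
proof -
  let ?high_zero = "\<exists>P. computation E I P \<and> int n \<le> dmax P \<and> dd P = 0"
  let ?cycles = "\<exists>B C1 A C2 D. computation E I (B @ C1 @ A @ C2 @ D)
    \<and> is_path E B \<and> is_cycle E C1 \<and> is_path E A \<and> is_cycle E C2 \<and> is_path E D
    \<and> dd C1 * dd C2 < 0"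
  have cycles: ?cycles if ?high_zero
    using that opposite_cycles_if_dmax_ge_card[OF assms(1)] \<open>card Q = n\<close> by blast
  have unbounded: "\<exists>P. computation E I P \<and> int k < dmax P \<and> dd P = 0" if ?cycles for k
  proof -
    from that obtain B C1 A C2 D where "computation E I (B @ C1 @ A @ C2 @ D)"
      and "is_cycle E C1" and "is_cycle E C2" and "dd C1 * dd C2 < 0"
      by blast
    from zero_computation_from_opposite_cycles[OF this, of "Suc k"] show ?thesis
      by auto
  qed
  have "\<not> zero_avoiding E I \<longleftrightarrow> ?high_zero"
  proof
    assume "\<not> zero_avoiding E I"
    then show ?high_zero
      unfolding not_zero_avoiding_iff by (meson less_imp_le)
  next
    assume ?high_zero
    then show "\<not> zero_avoiding E I"
      unfolding not_zero_avoiding_iff using cycles unbounded by blast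
  qed
  moreover have "?high_zero \<longleftrightarrow> ?cycles"
    using cycles unbounded[of n] by (meson less_imp_le)
  ultimately show ?thesis
    by simp
qed

end
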